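(* Fix $n\ge 2$, a dictator agent $t$, another agent $i\ne t$, and a constant $a\in(0,\frac12)$. For $b\in(0,1)$ and a profile $\mathbf{x}$ with $x_l=\min\mathbf{x}$, $x_r=\max\mathbf{x}$, $L=x_r-x_l$, define $$h_b(\mathbf{x})=\begin{cases} x_t+\max\left\{\frac{2(1-b)}{b}(x_t-x_l),\; x_r-x_t\right\} & \text{if } x_t\in[x_l,\,x_l+bL),\\[2pt] x_t-\max\left\{x_t-x_l,\; \frac{2b}{1-b}(x_r-x_t)\right\} & \text{if } x_t\in[x_l+bL,\,x_r].\end{cases}$$ Let $f$ be the mechanism that on $\mathbf{x}$ outputs $l_1=x_t$ and $l_2=h_a(\mathbf{x})$ if $x_i\le x_t$, and $l_2=h_{1-a}(\mathbf{x})$ if $x_i>x_t$. Then the approximation ratio of $f$ for social cost is $\frac{1-a}{a}(n-1)$, i.e. $SC(f,\mathbf{x})\le\frac{1-a}{a}(n-1)\,OPT(\mathbf{x})$ for every profile $\mathbf{x}\in\mathbb{R}^n$.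
   Context: Two-facility game on a line: agent $j$ has location $x_j\in\mathbb{R}$. For facility locations $\{l_1,l_2\}$, an agent at $y$ has cost $\min\{|l_1-y|,|l_2-y|\}$. $SC(f,\mathbf{x})$ is the sum over all agents of their costs under $f(\mathbf{x})$, and $OPT(\mathbf{x})=\min_{l_1,l_2\in\mathbb{R}}\sum_j\min\{|l_1-x_j|,|l_2-x_j|\}$. In the paper, "the approximation ratio of $f$ is $\gamma$" is defined to mean $SC(f,\mathbf{x})\le\gamma\,OPT(\mathbf{x})$ for all profiles $\mathbf{x}$. *)

theory Defs
  imports "HOL-Analysis.Analysis"
begin

text \<open>Agents are indexed by 0..n-1; a profile is a function x :: nat => real,
  of which only the values on {..<n} matter.\<close>

definition agent_cost :: "real \<times> real \<Rightarrow> real \<Rightarrow> real" where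
  "agent_cost l y = min \<bar>fst l - y\<bar> \<bar>snd l - y\<bar>"

definition social_cost :: "nat \<Rightarrow> real \<times> real \<Rightarrow> (nat \<Rightarrow> real) \<Rightarrow> real" where
  "social_cost n l x = (\<Sum>j<n. agent_cost l (x j))"

definition OPT :: "nat \<Rightarrow> (nat \<Rightarrow> real) \<Rightarrow> real" where
  "OPT n x = (INF l \<in> (UNIV :: (real \<times> real) set). social_cost n l x)"

definition xmin :: "nat \<Rightarrow> (nat \<Rightarrow> real) \<Rightarrow> real" where
  "xmin n x = Min (x ` {..<n})"

definition xmax :: "nat \<Rightarrow> (nat \<Rightarrow> real) \<Rightarrow> real" where
  "xmax n x = Max (x ` {..<n})"

definition h_fun :: "nat \<Rightarrow> nat \<Rightarrow> real \<Rightarrow> (nat \<Rightarrow> real) \<Rightarrow> real" where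
  "h_fun n t b x =
     (let xl = xmin n x; xr = xmax n x; L = xr - xl; xt = x t in
      if xt < xl + b * L
      then xt + max (2 * (1 - b) / b * (xt - xl)) (xr - xt)
      else xt - max (xt - xl) (2 * b / (1 - b) * (xr - xt)))"

definition mech :: "nat \<Rightarrow> nat \<Rightarrow> nat \<Rightarrow> real \<Rightarrow> (nat \<Rightarrow> real) \<Rightarrow> real \<times> real" where
  "mech n t i a x =
     (x t, if x i \<le> x t then h_fun n t a x else h_fun n t (1 - a) x)"

end

theory Submission
  imports Defs
begin

text \<open>Any two-facility placement must serve two of three agents \<open>p \<le> q \<le> r\<close> from one
  facility, so \<open>OPT\<close> is at least the smaller gap \<open>min (q - p) (r - q)\<close> of any such triple.
  The dictator \<open>t\<close> has cost zero, and a case analysis on the two branches of \<open>h_b\<close> bounds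
  the cost of every other agent by \<open>K \<cdot> OPT\<close> with \<open>K \<ge> max ((1 - b) / b) (b / (1 - b))\<close>
  and \<open>K \<ge> 1\<close>, using only the gap bound for triples drawn from \<open>x\<^sub>l, x\<^sub>t, x\<^sub>r\<close> and the
  agent itself. The second branch is the mirror image of the first under \<open>x \<mapsto> -x\<close>,
  \<open>b \<mapsto> 1 - b\<close>. For \<open>b \<in> {a, 1 - a}\<close> the constant \<open>K = (1 - a) / a\<close> qualifies.\<close>

lemma min_gap_le_two_facility_cost:
  fixes l1 l2 p q r :: real
  assumes "p \<le> q" "q \<le> r"
  shows "min (q - p) (r - q)
    \<le> min \<bar>l1 - p\<bar> \<bar>l2 - p\<bar> + min \<bar>l1 - q\<bar> \<bar>l2 - q\<bar> + min \<bar>l1 - r\<bar> \<bar>l2 - r\<bar>"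
  using assms by (simp add: min_def abs_if split: if_splits)

lemma social_cost_nonneg: "0 \<le> social_cost n l x"
  unfolding social_cost_def agent_cost_def by (intro sum_nonneg) auto

lemma OPT_nonneg: "0 \<le> OPT n x"
  unfolding OPT_def by (rule cINF_greatest) (auto simp: social_cost_nonneg)

lemma min_gap_le_OPT:
  assumes "p < n" "q < n" "r < n" "x p \<le> x q" "x q \<le> x r"
  shows "min (x q - x p) (x r - x q) \<le> OPT n x"
proof (cases "distinct [p, q, r]")
  case False
  then have "min (x q - x p) (x r - x q) \<le> 0" using assms by auto
  then show ?thesis using OPT_nonneg[of n x] by linarith
next
  case True
  show ?thesis unfolding OPT_def
  proof (rule cINF_greatest)
    fix l :: "real \<times> real"
    have "min (x q - x p) (x r - x q) \<le> (\<Sum>j\<in>{p, q, r}. agent_cost l (x j))"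
      using True min_gap_le_two_facility_cost[OF assms(4,5), of "fst l" "snd l"]
      by (simp add: agent_cost_def add.assoc)
    also have "\<dots> \<le> social_cost n l x"
      unfolding social_cost_def agent_cost_def using assms(1-3) by (intro sum_mono2) auto
    finally show "min (x q - x p) (x r - x q) \<le> social_cost n l x" .
  qed simp
qed

lemma min_dist_le_half_gap:
  fixes l1 l2 y :: real
  assumes "l1 \<le> y" "y \<le> l2"
  shows "min \<bar>l1 - y\<bar> \<bar>l2 - y\<bar> \<le> (l2 - l1) / 2"
  using assms by (simp add: min_def)

lemma cost_le_in_left_branch:
  fixes b K opt xl xt xr y :: real
  assumes b: "0 < b" "b < 1" and K: "(1 - b) / b \<le> K" "b / (1 - b) \<le> K" "1 \<le> K"
    and order: "xl \<le> xt" "xt \<le> xr" "xl \<le> y" "y \<le> xr"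
    and branch: "(1 - b) * (xt - xl) \<le> b * (xr - xt)"
    and gaps: "\<And>p q r. p \<in> {xl, xt, xr, y} \<Longrightarrow> q \<in> {xl, xt, xr, y} \<Longrightarrow> r \<in> {xl, xt, xr, y}
      \<Longrightarrow> p \<le> q \<Longrightarrow> q \<le> r \<Longrightarrow> min (q - p) (r - q) \<le> opt"
  shows "min \<bar>xt - y\<bar> \<bar>xt + max (2 * (1 - b) / b * (xt - xl)) (xr - xt) - y\<bar> \<le> K * opt"
proof -
  define d where "d = xt - xl"
  define e where "e = xr - xt"
  define l2 where "l2 = xt + max (2 * (1 - b) / b * d) e"
  have "0 \<le> opt" using gaps[of xt xt xt] by simp
  then have opt_le: "opt \<le> K * opt" using K(3) by (simp add: mult_right_mono[of 1 K opt, simplified])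
  have K_mono: "z \<le> opt \<Longrightarrow> K * z \<le> K * opt" for z using K(3) by (simp add: mult_left_mono)
  have "min \<bar>xt - y\<bar> \<bar>l2 - y\<bar> \<le> K * opt"
  proof (cases "y \<le> xt")
    case left: True
    have cost_le: "min \<bar>xt - y\<bar> \<bar>l2 - y\<bar> \<le> xt - y" using left by simp
    show ?thesis
    proof (cases "xt - y \<le> opt")
      case True
      then show ?thesis using cost_le opt_le by linarith
    next
      case False
      have "e \<le> opt" using gaps[of y xt xr] False left order by (simp add: e_def min_def split: if_splits)
      have "xt - y \<le> d" using order by (simp add: d_def)
      also have "\<dots> \<le> b / (1 - b) * e" using branch b by (simp add: d_def e_def field_simps)
      also have "\<dots> \<le> K * e" using mult_right_mono[OF K(2), of e] order by (simp add: e_def)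
      also have "\<dots> \<le> K * opt" using K_mono \<open>e \<le> opt\<close> .
      finally show ?thesis using cost_le by linarith
    qed
  next
    case right: False
    have cost_le: "min \<bar>xt - y\<bar> \<bar>l2 - y\<bar> \<le> y - xt" using right by simp
    show ?thesis
    proof (cases "y - xt \<le> opt")
      case True
      then show ?thesis using cost_le opt_le by linarith
    next
      case far: False
      have "d \<le> opt" using gaps[of xl xt y] far right order by (simp add: d_def min_def split: if_splits)
      have "xr - y \<le> opt" using gaps[of xt y xr] far right order by (simp add: min_def split: if_splits)
      show ?thesis
      proof (cases "2 * (1 - b) / b * d \<le> e")
        case True
        then have "min \<bar>xt - y\<bar> \<bar>l2 - y\<bar> \<le> xr - y"
          using right order by (simp add: l2_def e_def)
        then show ?thesis using \<open>xr - y \<le> opt\<close> opt_le by linarith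
      next
        case False
        have "min \<bar>xt - y\<bar> \<bar>l2 - y\<bar> \<le> (l2 - xt) / 2"
          by (rule min_dist_le_half_gap) (use right order in \<open>auto simp: l2_def e_def\<close>)
        also have "\<dots> = (1 - b) / b * d" using False b by (simp add: l2_def field_simps)
        also have "\<dots> \<le> K * d" using mult_right_mono[OF K(1), of d] order by (simp add: d_def)
        also have "\<dots> \<le> K * opt" using K_mono \<open>d \<le> opt\<close> .
        finally show ?thesis .
      qed
    qed
  qed
  then show ?thesis by (simp add: l2_def d_def e_def)
qed

lemma cost_le_in_right_branch:
  fixes b K opt xl xt xr y :: real
  assumes b: "0 < b" "b < 1" and K: "(1 - b) / b \<le> K" "b / (1 - b) \<le> K" "1 \<le> K"
    and order: "xl \<le> xt" "xt \<le> xr" "xl \<le> y" "y \<le> xr"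
    and branch: "b * (xr - xt) \<le> (1 - b) * (xt - xl)"
    and gaps: "\<And>p q r. p \<in> {xl, xt, xr, y} \<Longrightarrow> q \<in> {xl, xt, xr, y} \<Longrightarrow> r \<in> {xl, xt, xr, y}
      \<Longrightarrow> p \<le> q \<Longrightarrow> q \<le> r \<Longrightarrow> min (q - p) (r - q) \<le> opt"
  shows "min \<bar>xt - y\<bar> \<bar>xt - max (xt - xl) (2 * b / (1 - b) * (xr - xt)) - y\<bar> \<le> K * opt"
proof -
  have mirrored_gaps: "min (q - p) (r - q) \<le> opt"
    if "p \<in> {- xr, - xt, - xl, - y}" "q \<in> {- xr, - xt, - xl, - y}" "r \<in> {- xr, - xt, - xl, - y}"
      "p \<le> q" "q \<le> r" for p q r
    using gaps[of "- r" "- q" "- p"] that by (auto simp: min.commute)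
  have "min \<bar>- xt - - y\<bar>
      \<bar>- xt + max (2 * (1 - (1 - b)) / (1 - b) * (- xt - - xr)) (- xl - - xt) - - y\<bar> \<le> K * opt"
    by (rule cost_le_in_left_branch[of "1 - b" K "- xr" "- xt" "- xl" "- y"])
      (use b K order branch mirrored_gaps in \<open>auto simp: algebra_simps\<close>)
  then show ?thesis by (simp add: abs_minus_commute max.commute)
qed

lemma agent_cost_h_fun_le:
  fixes b K :: real
  assumes "0 < b" "b < 1" "(1 - b) / b \<le> K" "b / (1 - b) \<le> K" "1 \<le> K" "t < n" "j < n"
  shows "agent_cost (x t, h_fun n t b x) (x j) \<le> K * OPT n x"
proof -
  let ?S = "x ` {..<n}"
  have S: "finite ?S" "?S \<noteq> {}" using assms(6) by auto
  have in_S: "{xmin n x, x t, xmax n x, x j} \<subseteq> ?S"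
    using assms(6,7) Min_in[OF S] Max_in[OF S] by (auto simp: xmin_def xmax_def)
  have gaps: "min (q - p) (r - q) \<le> OPT n x"
    if mem: "p \<in> {xmin n x, x t, xmax n x, x j}" "q \<in> {xmin n x, x t, xmax n x, x j}"
      "r \<in> {xmin n x, x t, xmax n x, x j}" and le: "p \<le> q" "q \<le> r" for p q r
  proof -
    obtain kp kq kr where "kp < n" "kq < n" "kr < n" "p = x kp" "q = x kq" "r = x kr"
      using mem in_S by (metis image_iff lessThan_iff subsetD)
    then show ?thesis using min_gap_le_OPT[of kp n kq kr x] le by simp
  qed
  have order: "xmin n x \<le> x t" "x t \<le> xmax n x" "xmin n x \<le> x j" "x j \<le> xmax n x"
    using assms(6,7) S by (auto simp: xmin_def xmax_def)
  show ?thesis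
  proof (cases "x t < xmin n x + b * (xmax n x - xmin n x)")
    case True
    then have "(1 - b) * (x t - xmin n x) \<le> b * (xmax n x - x t)" by (simp add: algebra_simps)
    from cost_le_in_left_branch[OF assms(1-5) order this gaps] True show ?thesis
      by (simp add: agent_cost_def h_fun_def Let_def)
  next
    case False
    then have "b * (xmax n x - x t) \<le> (1 - b) * (x t - xmin n x)" by (simp add: algebra_simps)
    from cost_le_in_right_branch[OF assms(1-5) order this gaps] False show ?thesis
      by (simp add: agent_cost_def h_fun_def Let_def)
  qed
qed

lemma social_cost_dictator_le:
  assumes "t < n" "\<And>j. j < n \<Longrightarrow> agent_cost (x t, l) (x j) \<le> B"
  shows "social_cost n (x t, l) x \<le> (real n - 1) * B"
proof -
  have "social_cost n (x t, l) x = (\<Sum>j\<in>{..<n} - {t}. agent_cost (x t, l) (x j))"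
    unfolding social_cost_def using assms(1)
    by (subst sum.remove[of _ t]) (auto simp: agent_cost_def)
  also have "\<dots> \<le> (\<Sum>j\<in>{..<n} - {t}. B)" using assms(2) by (intro sum_mono) auto
  also have "\<dots> = (real n - 1) * B" using assms(1) by (simp add: of_nat_diff)
  finally show ?thesis .
qed

theorem theorem8:
  fixes n t i :: nat and a :: real
  assumes "n \<ge> 2" and "t < n" and "i < n" and "i \<noteq> t"
    and "0 < a" and "a < 1 / 2"
  shows "\<forall>x :: nat \<Rightarrow> real.
           social_cost n (mech n t i a x) x \<le> (1 - a) / a * (real n - 1) * OPT n x"
proof
  fix x :: "nat \<Rightarrow> real"
  define K where "K = (1 - a) / a"
  have K: "1 \<le> K" "a / (1 - a) \<le> K" unfolding K_def using assms(5,6) by (simp_all add: field_simps)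
  obtain b where b: "b \<in> {a, 1 - a}" "mech n t i a x = (x t, h_fun n t b x)"
    unfolding mech_def by (cases "x i \<le> x t") auto
  then have "0 < b" "b < 1" "(1 - b) / b \<le> K" "b / (1 - b) \<le> K"
    using assms(5,6) K by (auto simp: K_def)
  then have "social_cost n (x t, h_fun n t b x) x \<le> (real n - 1) * (K * OPT n x)"
    using social_cost_dictator_le agent_cost_h_fun_le K(1) assms(2) by blast
  then show "social_cost n (mech n t i a x) x \<le> (1 - a) / a * (real n - 1) * OPT n x"
    unfolding b(2) K_def by (simp add: mult_ac)
qed

end
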